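(* Let $M\geq 1$ be an integer and let $(\tau,R)$ be an $M$-layer medium, with $\tau=(\tau_0,\ldots,\tau_M)$ and $R=(R_0,\ldots,R_M)$. Then \[ G^{(\tau,R)}(t)=\sum_{k\in\mathfrak{L}_M}a(R,k)\,\delta(t-\langle k,\tau\rangle), \] where for each $k\in\mathfrak{L}_M$, setting $u=\min\{\mathbb{1},\tilde{k}\}$, \[ a(R,k)=\sum_{b\in V(k)}\binom{k}{b}\binom{\tilde{k}-u}{b-u}(-R)^{\tilde{k}-b}R^{k-b}T^{2b}, \] and $V(k)$ denotes the set of $b\in\mathbb{Z}^{M+1}$ such that $u\leq b\leq\min\{k,\tilde{k}\}$.
   Context: Fix depths $z_{-1}<z_0<z_1<\cdots<z_M$. An $M$-layer medium is a pair $(\tau,R)$ with $\tau=(\tau_0,\ldots,\tau_M)$ positive reals (two-way travel times; $\tau_j/2$ is the time to traverse between $z_{j-1}$ and $z_j$) and $R=(R_0,\ldots,R_M)$ reals with $-1<R_n<1$ (reflection coefficients at $z_n$). Set $T_n=\sqrt{1-R_n^2}$ and $T=(T_0,\ldots,T_M)$. A (reflection) scattering sequence is a finite sequence $\mathsf{p}=(\mathsf{p}_0,\ldots,\mathsf{p}_L)$ with $L\geq 2$, $\mathsf{p}_0=\mathsf{p}_L=z_{-1}$, $\mathsf{p}_i\in\{z_0,\ldots,z_M\}$ for $1\le i\le L-1$, and for every $0\le i\le L-1$ there is $-1\le j\le M-1$ with $\{\mathsf{p}_i,\mathsf{p}_{i+1}\}=\{z_j,z_{j+1}\}$. Let $\mathsf{S}_M$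 be the set of these. The weight of $\mathsf{p}$ is $w(\mathsf{p})=\prod_{i=1}^{L-1}w_i$, where if $\mathsf{p}_i=z_j$: $w_i=R_j$ if $\mathsf{p}_{i-1}=\mathsf{p}_{i+1}=z_{j-1}$; $w_i=-R_j$ if $\mathsf{p}_{i-1}=\mathsf{p}_{i+1}=z_{j+1}$; $w_i=T_j$ otherwise. The arrival time of $\mathsf{p}$ is $\sigma(\mathsf{p})=\sum_{i=0}^{L-1}\tau_{j_i}/2$, where step $i$ goes between $z_{j_i-1}$ and $z_{j_i}$ ($0\le j_i\le M$). The reflection Green's function (velocity impulse response recorded at $z_{-1}$ for a downward unit plane-wave impulse started at $z_{-1}$) is $G^{(\tau,R)}(t)=\sum_{\mathsf{p}\in\mathsf{S}_M}w(\mathsf{p})\,\delta(t-\sigma(\mathsf{p}))$, terms with equal arrival times being combined. $\mathfrak{L}_M=\{(k_0,\ldots,k_M)\in\mathbb{Z}_{\ge 0}^{M+1}: k_0=1\text{ and for all }n\le M-1,\ k_n=0\Rightarrow k_{n+1}=0\}$. Vector conventions: for $k=(k_0,\ldots,k_M)$, $\tilde{k}=(k_1,\ldots,k_M,0)$; $\mathbb{1}=(1,\ldots,1)\in\mathbb{Z}^{M+1}$; $\min$ and $\le$ are entrywise; $\langle k,\tau\rangle=\sum_n k_n\tau_n$; $s^d=\prod_{n=0}^M s_n^{d_n}$ (with $0^0=1$); $\binom{x}{y}=\prod_{n=0}^M\binom{x_n}{y_n}$. *)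

theory Defs
  imports Complex_Main
begin

text \<open>Depth z_j is represented by its index j :: int, with -1 \<le> j \<le> M.
  Media: tau, R :: nat \<Rightarrow> real, only the entries 0..M matter.
  Vectors in Z^(M+1) with nonnegative entries are represented as nat \<Rightarrow> nat
  vanishing beyond M.\<close>

definition transm :: "(nat \<Rightarrow> real) \<Rightarrow> nat \<Rightarrow> real" where
  "transm R n = sqrt (1 - (R n)\<^sup>2)"

definition scat_seqs :: "nat \<Rightarrow> int list set" where
  "scat_seqs M = {p. length p \<ge> 3 \<and> p ! 0 = -1 \<and> p ! (length p - 1) = -1
     \<and> (\<forall>i. 0 < i \<and> i < length p - 1 \<longrightarrow> 0 \<le> p ! i \<and> p ! i \<le> int M)
     \<and> (\<forall>i. i < length p - 1 \<longrightarrow> \<bar>p ! i - p ! Suc i\<bar> = 1)}"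

definition local_weight :: "(nat \<Rightarrow> real) \<Rightarrow> int list \<Rightarrow> nat \<Rightarrow> real" where
  "local_weight R p i =
     (let j = p ! i in
      if p ! (i - 1) = j - 1 \<and> p ! Suc i = j - 1 then R (nat j)
      else if p ! (i - 1) = j + 1 \<and> p ! Suc i = j + 1 then - R (nat j)
      else transm R (nat j))"

definition seq_weight :: "(nat \<Rightarrow> real) \<Rightarrow> int list \<Rightarrow> real" where
  "seq_weight R p = (\<Prod>i\<in>{1..<length p - 1}. local_weight R p i)"

text \<open>Step i goes between z_(j-1) and z_j where j = max p_i p_(i+1).\<close>
definition arrival :: "(nat \<Rightarrow> real) \<Rightarrow> int list \<Rightarrow> real" where
  "arrival tau p = (\<Sum>i<length p - 1. tau (nat (max (p ! i) (p ! Suc i))) / 2)"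

text \<open>The reflection Green's function, a (locally finite) sum of Dirac deltas,
  represented by its coefficient function: green M tau R t is the total weight
  of the delta located at time t (terms with equal arrival times combined).\<close>
definition green :: "nat \<Rightarrow> (nat \<Rightarrow> real) \<Rightarrow> (nat \<Rightarrow> real) \<Rightarrow> real \<Rightarrow> real" where
  "green M tau R t = (\<Sum>p\<in>{p \<in> scat_seqs M. arrival tau p = t}. seq_weight R p)"

definition layer_vecs :: "nat \<Rightarrow> (nat \<Rightarrow> nat) set" where
  "layer_vecs M = {k. (\<forall>n>M. k n = 0) \<and> k 0 = 1
      \<and> (\<forall>n<M. k n = 0 \<longrightarrow> k (Suc n) = 0)}"

definition vinner :: "nat \<Rightarrow> (nat \<Rightarrow> nat) \<Rightarrow> (nat \<Rightarrow> real) \<Rightarrow> real" where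
  "vinner M k tau = (\<Sum>n\<le>M. real (k n) * tau n)"

definition shiftv :: "nat \<Rightarrow> (nat \<Rightarrow> nat) \<Rightarrow> nat \<Rightarrow> nat" where
  "shiftv M k n = (if n < M then k (Suc n) else 0)"

definition Vset :: "nat \<Rightarrow> (nat \<Rightarrow> nat) \<Rightarrow> (nat \<Rightarrow> nat) set" where
  "Vset M k = {b. (\<forall>n>M. b n = 0) \<and>
     (\<forall>n\<le>M. min 1 (shiftv M k n) \<le> b n \<and> b n \<le> min (k n) (shiftv M k n))}"

definition coef_a :: "nat \<Rightarrow> (nat \<Rightarrow> real) \<Rightarrow> (nat \<Rightarrow> nat) \<Rightarrow> real" where
  "coef_a M R k = (\<Sum>b\<in>Vset M k. \<Prod>n\<le>M.
     let kt = shiftv M k n; u = min 1 kt in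
       real (k n choose b n) * real ((kt - u) choose (b n - u))
       * (- R n) ^ (kt - b n) * R n ^ (k n - b n) * transm R n ^ (2 * b n))"

end

theory Submission
  imports Defs "HOL-Library.FuncSet"
begin

text \<open>A reflection scattering sequence is a walk that starts at depth 0 and stops the first time it
  returns to the surface depth -1. Its arrival time depends only on how often it crosses each layer,
  and the upward crossing counts of such walks lie in \<open>layer_vecs M\<close>. The weight of
  a walk is a product over the interfaces \<open>z\<^sub>n\<close>, and the factor collected at \<open>z\<^sub>n\<close> only depends on
  the order in which the walk leaves \<open>z\<^sub>n\<close> upwards and downwards. Hence the total weight of the walks
  with prescribed crossing counts factorises into one interface sum per depth (proved by peeling off
  the first step of the walks), and each interface sum satisfies a Pascal-type recursion whose
  solution is the binomial expression \<open>a(R, k)\<close>.\<close>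

section \<open>Interface sums\<close>

text \<open>\<open>iface_poly x y t fa a c\<close> sums, over all orders of \<open>a\<close> upward and \<open>c\<close> downward exits from one
  interface with an upward exit last, the product of the exit weights: \<open>x\<close> for reflection from above,
  \<open>y\<close> for reflection from below and \<open>t\<close> for transmission. The flag \<open>fa\<close> records whether the current
  visit arrived from above.\<close>

fun iface_poly :: "'a::comm_semiring_1 \<Rightarrow> 'a \<Rightarrow> 'a \<Rightarrow> bool \<Rightarrow> nat \<Rightarrow> nat \<Rightarrow> 'a" where
  "iface_poly x y t fa 0 c = (if c = 0 then 1 else 0)"
| "iface_poly x y t fa (Suc a) 0 = (if fa then x else t) * iface_poly x y t True a 0"
| "iface_poly x y t fa (Suc a) (Suc c) =
     (if fa then t else y) * iface_poly x y t False (Suc a) c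
   + (if fa then x else t) * iface_poly x y t True a (Suc c)"

definition iface_above :: "'a::comm_semiring_1 \<Rightarrow> 'a \<Rightarrow> 'a \<Rightarrow> nat \<Rightarrow> nat \<Rightarrow> 'a" where
  "iface_above x y t a c = (if c = 0 then x ^ a else
     (\<Sum>r<a. of_nat (a choose Suc r) * of_nat ((c - 1) choose r)
             * x ^ (a - Suc r) * y ^ (c - 1 - r) * t ^ (2 * r + 2)))"

definition iface_below :: "'a::comm_semiring_1 \<Rightarrow> 'a \<Rightarrow> 'a \<Rightarrow> nat \<Rightarrow> nat \<Rightarrow> 'a" where
  "iface_below x y t a c = (if a = 0 then (if c = 0 then 1 else 0) else
     (\<Sum>r<a. of_nat ((a - 1) choose r) * of_nat (c choose r)
             * x ^ (a - 1 - r) * y ^ (c - r) * t ^ (2 * r + 1)))"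

lemma power_diff_Suc: "r < a \<Longrightarrow> x ^ (a - r) = x * x ^ (a - Suc r)"
  by (metis Suc_diff_Suc power_Suc)

lemma iface_below_Suc_0: "iface_below x y t (Suc a) 0 = t * iface_above x y t a 0"
  unfolding iface_below_def iface_above_def
  by (subst sum.lessThan_Suc_shift) (simp add: binomial_eq_0 mult.commute)

lemma iface_above_Suc_Suc:
  "iface_above x y t (Suc a) (Suc c) = t * iface_below x y t (Suc a) c + x * iface_above x y t a (Suc c)"
proof -
  let ?term = "\<lambda>j r. of_nat (a choose j) * of_nat (c choose r) * x ^ (a - r) * y ^ (c - r) * t ^ (2 * r + 2)"
  have "t * iface_below x y t (Suc a) c = (\<Sum>r<Suc a. ?term r r)"
    by (simp add: iface_below_def sum_distrib_left mult_ac del: sum.lessThan_Suc)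
  moreover have "x * iface_above x y t a (Suc c) = (\<Sum>r<Suc a. ?term (Suc r) r)"
  proof -
    have "x * iface_above x y t a (Suc c) = (\<Sum>r<a. ?term (Suc r) r)"
      by (auto simp: iface_above_def sum_distrib_left power_diff_Suc mult_ac intro!: sum.cong)
    then show ?thesis by (simp add: binomial_eq_0)
  qed
  ultimately show ?thesis
    by (simp add: iface_above_def binomial_Suc_Suc sum.distrib[symmetric] algebra_simps)
qed

lemma iface_below_Suc_Suc:
  "iface_below x y t (Suc a) (Suc c) = y * iface_below x y t (Suc a) c + t * iface_above x y t a (Suc c)"
proof -
  let ?term = "\<lambda>b r. of_nat (a choose Suc r) * of_nat (b choose Suc r)
                     * x ^ (a - Suc r) * y ^ (c - r) * t ^ (2 * r + 3)"
  have "iface_below x y t (Suc a) (Suc c) = y ^ Suc c * x ^ a * t + (\<Sum>r<a. ?term (Suc c) r)"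
    unfolding iface_below_def
    by (subst sum.lessThan_Suc_shift) (simp add: mult_ac eval_nat_numeral)
  moreover have "y * iface_below x y t (Suc a) c = y ^ Suc c * x ^ a * t + (\<Sum>r<a. ?term c r)"
  proof -
    have "y * (of_nat (a choose Suc r) * of_nat (c choose Suc r) * x ^ (a - Suc r)
             * y ^ (c - Suc r) * t ^ (2 * Suc r + 1)) = ?term c r" for r
      by (cases "r < c") (simp_all add: power_diff_Suc binomial_eq_0 mult_ac eval_nat_numeral)
    then show ?thesis
      unfolding iface_below_def
      by (subst sum.lessThan_Suc_shift) (simp add: distrib_left sum_distrib_left mult_ac)
  qed
  moreover have "t * iface_above x y t a (Suc c) = (\<Sum>r<a. of_nat (a choose Suc r) * of_nat (c choose r)
                     * x ^ (a - Suc r) * y ^ (c - r) * t ^ (2 * r + 3))"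
    by (simp add: iface_above_def sum_distrib_left mult_ac eval_nat_numeral)
  ultimately show ?thesis
    by (simp add: binomial_Suc_Suc sum.distrib[symmetric] algebra_simps)
qed

lemma iface_poly_closed:
  "iface_poly x y t fa a c = (if fa then iface_above x y t a c else iface_below x y t a c)"
proof (induction x y t fa a c rule: iface_poly.induct)
  case (1 x y t fa c)
  then show ?case by (simp add: iface_above_def iface_below_def)
next
  case (2 x y t fa a)
  then show ?case by (auto simp: iface_below_Suc_0) (simp add: iface_above_def)
next
  case (3 x y t fa a c)
  then show ?case by (auto simp: iface_above_Suc_Suc iface_below_Suc_Suc)
qed

lemma iface_poly_from_above:
  "iface_poly x y t True a c =
     (\<Sum>j\<in>{min 1 c..min a c}. of_nat (a choose j) * of_nat ((c - min 1 c) choose (j - min 1 c))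
        * y ^ (c - j) * x ^ (a - j) * t ^ (2 * j))"
proof (cases c)
  case 0
  then show ?thesis by (simp add: iface_poly_closed iface_above_def)
next
  case (Suc c')
  define g where "g j = of_nat (a choose j) * of_nat (c' choose (j - 1)) * y ^ (Suc c' - j) * x ^ (a - j) * t ^ (2 * j)" for j
  have "iface_poly x y t True a c = (\<Sum>r<a. g (Suc r))"
    unfolding iface_poly_closed iface_above_def Suc g_def by (simp add: mult_ac)
  also have "\<dots> = (\<Sum>j\<in>{1..a}. g j)"
    using sum.atLeast1_atMost_eq[of g a] by simp
  also have "\<dots> = (\<Sum>j\<in>{1..min a c}. g j)"
    by (rule sum.mono_neutral_right) (auto simp: g_def binomial_eq_0 Suc)
  finally show ?thesis unfolding g_def Suc by simp
qed


section \<open>Walks to the surface\<close>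

text \<open>Layer \<open>l\<close> lies between depths \<open>l - 1\<close> and \<open>l\<close>.\<close>

fun surface_walk :: "nat \<Rightarrow> int list \<Rightarrow> bool" where
  "surface_walk M [] = False"
| "surface_walk M [v] = (v = -1)"
| "surface_walk M (v # w # r) = (0 \<le> v \<and> v \<le> int M \<and> \<bar>v - w\<bar> = 1 \<and> surface_walk M (w # r))"

fun up_crossings :: "int list \<Rightarrow> nat \<Rightarrow> nat" where
  "up_crossings (v # w # r) l = (if w = v - 1 \<and> v = int l then 1 else 0) + up_crossings (w # r) l"
| "up_crossings _ l = 0"

fun down_crossings :: "int list \<Rightarrow> nat \<Rightarrow> nat" where
  "down_crossings (v # w # r) l = (if w = v + 1 \<and> w = int l then 1 else 0) + down_crossings (w # r) l"
| "down_crossings _ l = 0"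

lemma surface_walk_not_Nil [simp]: "surface_walk M q \<Longrightarrow> q \<noteq> []"
  by auto

lemma surface_walk_range: "surface_walk M q \<Longrightarrow> x \<in> set q \<Longrightarrow> -1 \<le> x \<and> x \<le> int M"
  by (induction M q rule: surface_walk.induct) auto

lemma surface_walk_hd_range: "surface_walk M q \<Longrightarrow> -1 \<le> hd q \<and> hd q \<le> int M"
  by (cases q) (auto dest: surface_walk_range)

lemma up_crossings_eq_down_crossings:
  "surface_walk M q \<Longrightarrow> up_crossings q l = down_crossings q l + (if int l \<le> hd q then 1 else 0)"
  by (induction M q rule: surface_walk.induct) (auto split: if_splits)

lemma crossings_beyond_bottom:
  "surface_walk M q \<Longrightarrow> M < l \<Longrightarrow> up_crossings q l = 0 \<and> down_crossings q l = 0"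
proof (induction M q rule: surface_walk.induct)
  case (3 M v w r)
  then have "w \<noteq> int l" using surface_walk_range[of M "w # r" w] by auto
  then show ?case using 3 by auto
qed auto

lemma down_crossings_0: "surface_walk M q \<Longrightarrow> down_crossings q 0 = 0"
  by (induction M q rule: surface_walk.induct) auto

lemma up_crossings_pos: "surface_walk M q \<Longrightarrow> int l \<le> hd q \<Longrightarrow> 0 < up_crossings q l"
  using up_crossings_eq_down_crossings by fastforce

lemma up_crossings_Suc_pos: "surface_walk M q \<Longrightarrow> 0 < up_crossings q (Suc l) \<Longrightarrow> 0 < up_crossings q l"
proof (induction M q rule: surface_walk.induct)
  case (3 M v w r)
  show ?case
  proof (cases "w = v - 1 \<and> v = int (Suc l)")
    case True
    then have "0 < up_crossings (w # r) l" using 3 by (intro up_crossings_pos[of M]) auto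
    then show ?thesis by simp
  qed (use 3 in auto)
qed auto

definition walks :: "nat \<Rightarrow> int \<Rightarrow> (nat \<Rightarrow> nat) \<Rightarrow> (nat \<Rightarrow> nat) \<Rightarrow> int list set" where
  "walks M v up dn = {q. surface_walk M q \<and> hd q = v \<and> up_crossings q = up \<and> down_crossings q = dn}"

lemma walks_from_surface:
  "walks M (-1) up dn = (if up = (\<lambda>_. 0) \<and> dn = (\<lambda>_. 0) then {[-1]} else {})"
proof -
  have "q \<in> walks M (-1) up dn \<longleftrightarrow> q = [-1] \<and> up = (\<lambda>_. 0) \<and> dn = (\<lambda>_. 0)" for q
    unfolding walks_def by (cases "(M, q)" rule: surface_walk.cases) (auto simp: fun_eq_iff)
  then show ?thesis by auto
qed

lemma walks_outside_empty: "v < -1 \<or> int M < v \<Longrightarrow> walks M v up dn = {}"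
  unfolding walks_def by (auto dest: surface_walk_hd_range)

lemma fun_eq_upd_Suc_iff: "f = g(l := Suc (g l)) \<longleftrightarrow> 0 < f l \<and> g = f(l := f l - 1)"
  by (auto simp: fun_eq_iff)

lemma crossings_step_down:
  assumes "0 \<le> v"
  shows "up_crossings (v # (v + 1) # r) = up_crossings ((v + 1) # r)"
    and "down_crossings (v # (v + 1) # r) = (down_crossings ((v + 1) # r))
           (Suc (nat v) := Suc (down_crossings ((v + 1) # r) (Suc (nat v))))"
  using assms by (auto simp: fun_eq_iff)

lemma crossings_step_up:
  assumes "0 \<le> v"
  shows "up_crossings (v # (v - 1) # r) = (up_crossings ((v - 1) # r))
           (nat v := Suc (up_crossings ((v - 1) # r) (nat v)))"
    and "down_crossings (v # (v - 1) # r) = down_crossings ((v - 1) # r)"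
  using assms by (auto simp: fun_eq_iff)

lemma walks_step:
  assumes "0 \<le> v" "v \<le> int M"
  shows "walks M v up dn =
    (if 0 < dn (Suc (nat v)) then Cons v ` walks M (v + 1) up (dn(Suc (nat v) := dn (Suc (nat v)) - 1)) else {})
  \<union> (if 0 < up (nat v) then Cons v ` walks M (v - 1) (up(nat v := up (nat v) - 1)) dn else {})"
    (is "_ = ?rhs")
proof -
  have Cons_mem: "v # w # r \<in> walks M v up dn \<longleftrightarrow>
      w = v + 1 \<and> 0 < dn (Suc (nat v)) \<and> w # r \<in> walks M (v + 1) up (dn(Suc (nat v) := dn (Suc (nat v)) - 1))
    \<or> w = v - 1 \<and> 0 < up (nat v) \<and> w # r \<in> walks M (v - 1) (up(nat v := up (nat v) - 1)) dn" for w r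
  proof (cases "w = v + 1")
    case True
    then show ?thesis using assms
      by (auto simp: walks_def crossings_step_down fun_eq_upd_Suc_iff simp del: up_crossings.simps down_crossings.simps)
  next
    case False
    then show ?thesis using assms
      by (cases "w = v - 1")
         (auto simp: walks_def crossings_step_up fun_eq_upd_Suc_iff simp del: up_crossings.simps down_crossings.simps)
  qed
  show ?thesis
  proof (intro set_eqI iffI)
    fix q assume "q \<in> walks M v up dn"
    then obtain w r where "q = v # w # r" using assms unfolding walks_def
      by (cases "(M, q)" rule: surface_walk.cases) auto
    with \<open>q \<in> walks M v up dn\<close> have "v # w # r \<in> walks M v up dn" by simp
    then show "q \<in> ?rhs"
      unfolding Cons_mem \<open>q = v # w # r\<close> by (elim disjE) auto
  next
    fix q assume "q \<in> ?rhs"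
    then obtain w r where q: "q = v # w # r" and
      "w = v + 1 \<and> 0 < dn (Suc (nat v)) \<and> w # r \<in> walks M (v + 1) up (dn(Suc (nat v) := dn (Suc (nat v)) - 1))
     \<or> w = v - 1 \<and> 0 < up (nat v) \<and> w # r \<in> walks M (v - 1) (up(nat v := up (nat v) - 1)) dn"
      by (auto simp: walks_def split: if_splits elim: surface_walk.elims)
         (metis list.collapse surface_walk_not_Nil)
    then show "q \<in> walks M v up dn" unfolding q Cons_mem by blast
  qed
qed

lemma sum_fun_upd_pred_less:
  fixes f :: "'a \<Rightarrow> nat"
  assumes "finite A" "l \<in> A" "0 < f l"
  shows "sum (f(l := f l - 1)) A < sum f A"
proof -
  have "sum (f(l := f l - 1)) A = (f l - 1) + sum f (A - {l})"
    using assms by (simp add: sum.remove)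
  also have "\<dots> < sum f A"
    using assms by (simp add: sum.remove)
  finally show ?thesis .
qed

lemma finite_walks:
  assumes "\<forall>l>M. up l = 0 \<and> dn l = 0"
  shows "finite (walks M v up dn)"
  using assms
proof (induction "sum up {..M} + sum dn {..M}" arbitrary: v up dn rule: less_induct)
  case less
  consider "v = -1" | "v < -1 \<or> int M < v" | "0 \<le> v \<and> v \<le> int M" by arith
  then show ?case
  proof cases
    case 1
    then show ?thesis by (simp add: walks_from_surface)
  next
    case 2
    then show ?thesis by (simp add: walks_outside_empty)
  next
    case 3
    let ?l = "Suc (nat v)"
    have "finite (walks M (v + 1) up (dn(?l := dn ?l - 1)))" if "0 < dn ?l"
    proof -
      have "?l \<le> M" using less.prems that by (metis not_le less_irrefl)
      then have "sum (dn(?l := dn ?l - 1)) {..M} < sum dn {..M}"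
        using that by (intro sum_fun_upd_pred_less) auto
      then show ?thesis using less.prems by (intro less.hyps) auto
    qed
    moreover have "finite (walks M (v - 1) (up(nat v := up (nat v) - 1)) dn)" if "0 < up (nat v)"
    proof -
      have "sum (up(nat v := up (nat v) - 1)) {..M} < sum up {..M}"
        using 3 that by (intro sum_fun_upd_pred_less) auto
      then show ?thesis using less.prems by (intro less.hyps) auto
    qed
    ultimately show ?thesis using 3 by (simp add: walks_step)
  qed
qed

section \<open>Weights of walks with prescribed crossings\<close>

definition exit_weight :: "(nat \<Rightarrow> real) \<Rightarrow> int \<Rightarrow> bool \<Rightarrow> bool \<Rightarrow> real" where
  "exit_weight R v fa goes_up =
     (if fa \<and> goes_up then R (nat v) else if \<not> fa \<and> \<not> goes_up then - R (nat v) else transm R (nat v))"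

text \<open>The flag of \<open>walk_weight\<close> records whether the walk arrived at its first vertex from above.\<close>

fun walk_weight :: "(nat \<Rightarrow> real) \<Rightarrow> bool \<Rightarrow> int list \<Rightarrow> real" where
  "walk_weight R fa (v # w # r) = exit_weight R v fa (w = v - 1) * walk_weight R (w = v + 1) (w # r)"
| "walk_weight R fa _ = 1"

lemma walk_weight_Cons:
  "q \<noteq> [] \<Longrightarrow> walk_weight R fa (v # q) = exit_weight R v fa (hd q = v - 1) * walk_weight R (hd q = v + 1) q"
  by (cases q) auto

lemma sum_walk_weight_step:
  assumes "0 \<le> v" "v \<le> int M" "\<forall>l>M. up l = 0 \<and> dn l = 0"
  shows "(\<Sum>q\<in>walks M v up dn. walk_weight R fa q) =
    (if 0 < dn (Suc (nat v)) then exit_weight R v fa False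
       * (\<Sum>q\<in>walks M (v + 1) up (dn(Suc (nat v) := dn (Suc (nat v)) - 1)). walk_weight R True q) else 0)
  + (if 0 < up (nat v) then exit_weight R v fa True
       * (\<Sum>q\<in>walks M (v - 1) (up(nat v := up (nat v) - 1)) dn. walk_weight R False q) else 0)"
proof -
  have sum_Cons: "(\<Sum>q\<in>Cons v ` walks M w up' dn'. walk_weight R fa q)
      = exit_weight R v fa (w = v - 1) * (\<Sum>q\<in>walks M w up' dn'. walk_weight R (w = v + 1) q)" for w up' dn'
    by (auto simp: sum.reindex sum_distrib_left walks_def walk_weight_Cons intro!: sum.cong)
  have "finite (walks M (v + 1) up (dn(Suc (nat v) := dn (Suc (nat v)) - 1)))"
    and "finite (walks M (v - 1) (up(nat v := up (nat v) - 1)) dn)"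
    using assms by (auto intro!: finite_walks)
  moreover have "Cons v ` walks M (v + 1) up' dn' \<inter> Cons v ` walks M (v - 1) up'' dn'' = {}" for up' dn' up'' dn''
    by (auto simp: walks_def)
  ultimately show ?thesis
    using assms by (simp add: walks_step sum.union_disjoint sum_Cons)
qed

definition iface_factor :: "(nat \<Rightarrow> real) \<Rightarrow> nat \<Rightarrow> bool \<Rightarrow> nat \<Rightarrow> nat \<Rightarrow> real" where
  "iface_factor R n = iface_poly (R n) (- R n) (transm R n)"

lemma iface_factor_rec:
  assumes "0 < a"
  shows "iface_factor R n fa a c =
      (if 0 < c then exit_weight R (int n) fa False * iface_factor R n False a (c - 1) else 0)
    + exit_weight R (int n) fa True * iface_factor R n True (a - 1) c"
  using assms by (cases a; cases c) (auto simp: iface_factor_def exit_weight_def)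

text \<open>When the walk is at depth \<open>v\<close>, every interface above \<open>v\<close> will next be reached from below and
  every interface below \<open>v\<close> from above; only the flag at \<open>v\<close> itself is free.\<close>

definition crossing_product ::
  "nat \<Rightarrow> (nat \<Rightarrow> real) \<Rightarrow> int \<Rightarrow> bool \<Rightarrow> (nat \<Rightarrow> nat) \<Rightarrow> (nat \<Rightarrow> nat) \<Rightarrow> real" where
  "crossing_product M R v fa up dn = (\<Prod>n\<le>M.
     iface_factor R n (if int n < v then False else if int n = v then fa else True) (up n) (dn (Suc n)))"

lemma prod_atMost_split:
  fixes f g :: "nat \<Rightarrow> 'a::comm_monoid_mult"
  assumes "m \<le> M" "\<And>n. n \<le> M \<Longrightarrow> n \<noteq> m \<Longrightarrow> f n = g n"
  shows "(\<Prod>n\<le>M. f n) = f m * (\<Prod>n\<in>{..M} - {m}. g n)"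
proof -
  have "(\<Prod>n\<le>M. f n) = f m * (\<Prod>n\<in>{..M} - {m}. f n)"
    using assms(1) by (intro prod.remove) auto
  also have "(\<Prod>n\<in>{..M} - {m}. f n) = (\<Prod>n\<in>{..M} - {m}. g n)"
    using assms(2) by (auto intro!: prod.cong)
  finally show ?thesis .
qed

lemma crossing_product_step:
  assumes "0 \<le> v" "v \<le> int M" "0 < up (nat v)"
  shows "crossing_product M R v fa up dn =
    (if 0 < dn (Suc (nat v)) then exit_weight R v fa False
       * crossing_product M R (v + 1) True up (dn(Suc (nat v) := dn (Suc (nat v)) - 1)) else 0)
  + exit_weight R v fa True * crossing_product M R (v - 1) False (up(nat v := up (nat v) - 1)) dn"
proof -
  define g where "g n = iface_factor R n (v < int n) (up n) (dn (Suc n))" for n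
  define P where "P = (\<Prod>n\<in>{..M} - {nat v}. g n)"
  have side_off_v:
    "(if int n < v then False else if int n = v then fa' else True) = (v < int n)"
    "(if int n < v + 1 then False else if int n = v + 1 then True else True) = (v < int n)"
    "(if int n < v - 1 then False else if int n = v - 1 then False else True) = (v < int n)"
    if "n \<noteq> nat v" for n fa'
    using assms that by (auto simp: int_eq_iff)
  have "crossing_product M R v fa up dn = iface_factor R (nat v) fa (up (nat v)) (dn (Suc (nat v))) * P"
    unfolding crossing_product_def P_def using assms
    by (subst prod_atMost_split[where m = "nat v" and g = g]) (auto simp: g_def side_off_v)
  moreover have "crossing_product M R (v + 1) True up (dn(Suc (nat v) := dn (Suc (nat v)) - 1))
      = iface_factor R (nat v) False (up (nat v)) (dn (Suc (nat v)) - 1) * P"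
    unfolding crossing_product_def P_def using assms
    by (subst prod_atMost_split[where m = "nat v" and g = g]) (auto simp: g_def side_off_v)
  moreover have "crossing_product M R (v - 1) False (up(nat v := up (nat v) - 1)) dn
      = iface_factor R (nat v) True (up (nat v) - 1) (dn (Suc (nat v))) * P"
    unfolding crossing_product_def P_def using assms
    by (subst prod_atMost_split[where m = "nat v" and g = g]) (auto simp: g_def side_off_v)
  ultimately show ?thesis
    using assms by (simp add: iface_factor_rec[of "up (nat v)"] algebra_simps)
qed

lemma crossing_product_surface:
  assumes "\<forall>l>M. dn l = 0" "dn 0 = 0"
  shows "crossing_product M R (-1) fa dn dn = (if dn = (\<lambda>_. 0) then 1 else 0)"
proof (cases "dn = (\<lambda>_. 0)")
  case True
  then show ?thesis by (simp add: crossing_product_def iface_factor_def)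
next
  case False
  then obtain l where l: "0 < dn l" by (auto simp: fun_eq_iff)
  then obtain n where n: "n < l" "dn n = 0" "0 < dn (Suc n)"
    using ex_least_nat_less[of "\<lambda>l. 0 < dn l"] assms(2) by blast
  have "l \<le> M" using assms(1) l by (metis not_le less_irrefl)
  moreover have "iface_factor R n True (dn n) (dn (Suc n)) = 0"
    using n by (simp add: iface_factor_def)
  ultimately have "crossing_product M R (-1) fa dn dn = 0"
    unfolding crossing_product_def using n(1) by (intro prod_zero bexI[of _ n]) auto
  then show ?thesis using False by simp
qed

lemma sum_walk_weight_eq_crossing_product:
  assumes "\<forall>l>M. up l = 0 \<and> dn l = 0" "dn 0 = 0" "-1 \<le> v" "v \<le> int M"
    and "\<forall>l. up l = dn l + (if int l \<le> v then 1 else 0)"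
  shows "(\<Sum>q\<in>walks M v up dn. walk_weight R fa q) = crossing_product M R v fa up dn"
  using assms
proof (induction "sum up {..M} + sum dn {..M}" arbitrary: v fa up dn rule: less_induct)
  case less
  show ?case
  proof (cases "v = -1")
    case True
    then have "up = dn" using less.prems(5) by auto
    then show ?thesis using True crossing_product_surface[of M dn] less.prems(1,2)
      by (simp add: walks_from_surface)
  next
    case False
    then have v: "0 \<le> v" using less.prems(3) by auto
    let ?l = "Suc (nat v)"
    have up_v: "0 < up (nat v)" using less.prems(5) v by (auto dest: spec[of _ "nat v"])
    have "(\<Sum>q\<in>walks M (v + 1) up (dn(?l := dn ?l - 1)). walk_weight R True q)
        = crossing_product M R (v + 1) True up (dn(?l := dn ?l - 1))" if "0 < dn ?l"
    proof -
      have "?l \<le> M" using less.prems that by (metis not_le less_irrefl)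
      then have "sum (dn(?l := dn ?l - 1)) {..M} < sum dn {..M}"
        using that by (intro sum_fun_upd_pred_less) auto
      moreover have "\<forall>l. up l = (dn(?l := dn ?l - 1)) l + (if int l \<le> v + 1 then 1 else 0)"
        using less.prems(5) v that by auto
      ultimately show ?thesis using less.prems v \<open>?l \<le> M\<close> by (intro less.hyps) auto
    qed
    moreover have "(\<Sum>q\<in>walks M (v - 1) (up(nat v := up (nat v) - 1)) dn. walk_weight R False q)
        = crossing_product M R (v - 1) False (up(nat v := up (nat v) - 1)) dn"
    proof -
      have "sum (up(nat v := up (nat v) - 1)) {..M} < sum up {..M}"
        using up_v less.prems(4) by (intro sum_fun_upd_pred_less) auto
      moreover have "\<forall>l. (up(nat v := up (nat v) - 1)) l = dn l + (if int l \<le> v - 1 then 1 else 0)"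
        using less.prems(5) v by auto
      ultimately show ?thesis using less.prems v by (intro less.hyps) auto
    qed
    ultimately show ?thesis
      unfolding sum_walk_weight_step[OF v less.prems(4,1)]
        crossing_product_step[where up = up, OF v less.prems(4) up_v]
      using up_v by simp
  qed
qed

section \<open>Scattering sequences as walks\<close>

lemma surface_walk_iff_nth:
  "surface_walk M q \<longleftrightarrow> q \<noteq> [] \<and> last q = -1 \<and>
     (\<forall>i < length q - 1. 0 \<le> q ! i \<and> q ! i \<le> int M \<and> \<bar>q ! i - q ! Suc i\<bar> = 1)"
proof (induction M q rule: surface_walk.induct)
  case (3 M v w r)
  have "(\<forall>i < length (v # w # r) - 1. P i) \<longleftrightarrow> P 0 \<and> (\<forall>i < length (w # r) - 1. P (Suc i))" for P
    using All_less_Suc2[of "length (w # r) - 1" P] by simp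
  then show ?case using 3 by auto
qed auto

lemma scat_seqs_iff:
  "p \<in> scat_seqs M \<longleftrightarrow> (\<exists>q. p = -1 # q \<and> surface_walk M q \<and> hd q = 0)"
proof
  assume p: "p \<in> scat_seqs M"
  then obtain q where p_eq: "p = -1 # q" and len: "2 \<le> length q"
    unfolding scat_seqs_def by (cases p) auto
  have interior: "0 \<le> q ! i \<and> q ! i \<le> int M" if "i < length q - 1" for i
    using p that unfolding scat_seqs_def p_eq by (auto dest!: spec[of _ "Suc i"])
  have steps: "\<bar>(-1 # q) ! i - q ! i\<bar> = 1" if "i < length q" for i
    using p that unfolding scat_seqs_def p_eq by (auto dest!: spec[of _ i])
  have "q ! 0 = 0" using interior[of 0] steps[of 0] len by (cases q) (auto simp: Suc_le_length_iff)
  moreover have "last q = -1"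
  proof -
    have "last q = (-1 # q) ! length q"
      using len by (cases q rule: rev_cases) (auto simp: nth_append)
    then show ?thesis using p unfolding scat_seqs_def p_eq by simp
  qed
  ultimately show "\<exists>q'. p = -1 # q' \<and> surface_walk M q' \<and> hd q' = 0"
    using p_eq len interior steps[of "Suc _"]
    by (auto simp: surface_walk_iff_nth hd_conv_nth simp flip: length_greater_0_conv)
next
  assume "\<exists>q. p = -1 # q \<and> surface_walk M q \<and> hd q = 0"
  then obtain q where p_eq: "p = -1 # q" and walk: "surface_walk M q" and start: "hd q = 0"
    by blast
  then have "2 \<le> length q"
    by (cases "(M, q)" rule: surface_walk.cases) auto
  with walk start show "p \<in> scat_seqs M"
    unfolding p_eq scat_seqs_def surface_walk_iff_nth
    by (auto simp: nth_Cons' hd_conv_nth last_conv_nth gr0_conv_Suc)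
qed

lemma local_weight_Cons: "0 < i \<Longrightarrow> local_weight R (u # q) (Suc i) = local_weight R q i"
  by (cases i) (simp_all add: local_weight_def Let_def)

lemma prod_local_weight_eq_walk_weight:
  "surface_walk M q \<Longrightarrow> \<bar>u - hd q\<bar> = 1 \<Longrightarrow>
   (\<Prod>i\<in>{1..<length (u # q) - 1}. local_weight R (u # q) i) = walk_weight R (hd q = u + 1) q"
proof (induction M q arbitrary: u rule: surface_walk.induct)
  case (3 M v w r)
  have "(\<Prod>i\<in>{1..<length (u # v # w # r) - 1}. local_weight R (u # v # w # r) i)
      = local_weight R (u # v # w # r) 1
        * (\<Prod>i\<in>{Suc 1..<Suc (length (v # w # r) - 1)}. local_weight R (u # v # w # r) i)"
    by (subst prod.atLeast_Suc_lessThan) auto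
  also have "(\<Prod>i\<in>{Suc 1..<Suc (length (v # w # r) - 1)}. local_weight R (u # v # w # r) i)
      = (\<Prod>i\<in>{1..<length (v # w # r) - 1}. local_weight R (v # w # r) i)"
    by (subst prod.shift_bounds_Suc_ivl) (auto simp: local_weight_Cons intro: prod.cong)
  also have "local_weight R (u # v # w # r) 1 = exit_weight R v (v = u + 1) (w = v - 1)"
    using "3.prems" by (auto simp: local_weight_def exit_weight_def Let_def)
  also have "(\<Prod>i\<in>{1..<length (v # w # r) - 1}. local_weight R (v # w # r) i) = walk_weight R (w = v + 1) (w # r)"
    using "3.IH"[of v] "3.prems" by auto
  finally show ?case by simp
qed simp_all

lemma seq_weight_eq_walk_weight:
  "surface_walk M q \<Longrightarrow> hd q = 0 \<Longrightarrow> seq_weight R (-1 # q) = walk_weight R True q"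
  unfolding seq_weight_def using prod_local_weight_eq_walk_weight[of M q "-1" R] by simp

lemma arrival_Cons:
  "arrival tau (v # w # r) = tau (nat (max v w)) / 2 + arrival tau (w # r)"
  unfolding arrival_def by (simp add: sum.lessThan_Suc_shift del: sum.lessThan_Suc)

lemma arrival_surface_walk:
  "surface_walk M q \<Longrightarrow>
     arrival tau q = (\<Sum>l\<le>M. real (up_crossings q l + down_crossings q l) * tau l / 2)"
proof (induction M q rule: surface_walk.induct)
  case (3 M v w r)
  define m where "m = nat (max v w)"
  have "m \<le> M"
    using 3 surface_walk_hd_range[of M "w # r"] unfolding m_def by auto
  moreover have "real (up_crossings (v # w # r) l + down_crossings (v # w # r) l) * tau l / 2
      = (if l = m then tau l / 2 else 0) + real (up_crossings (w # r) l + down_crossings (w # r) l) * tau l / 2"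
    for l using "3.prems" unfolding m_def by (auto simp: algebra_simps add_divide_distrib)
  ultimately have "(\<Sum>l\<le>M. real (up_crossings (v # w # r) l + down_crossings (v # w # r) l) * tau l / 2)
      = tau m / 2 + (\<Sum>l\<le>M. real (up_crossings (w # r) l + down_crossings (w # r) l) * tau l / 2)"
    by (simp only: sum.distrib) simp
  then show ?case using 3 by (simp add: arrival_Cons m_def)
qed (simp_all add: arrival_def)

lemma down_crossings_from_top:
  "surface_walk M q \<Longrightarrow> hd q = 0 \<Longrightarrow> down_crossings q = (up_crossings q)(0 := 0)"
  using up_crossings_eq_down_crossings[of M q] down_crossings_0[of M q]
  by (auto simp: fun_eq_iff)

lemma up_crossings_in_layer_vecs:
  assumes "surface_walk M q" "hd q = 0"
  shows "up_crossings q \<in> layer_vecs M"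
  unfolding layer_vecs_def
proof (intro CollectI conjI allI impI)
  show "up_crossings q l = 0" if "M < l" for l
    using crossings_beyond_bottom[OF assms(1) that] by simp
  show "up_crossings q 0 = 1"
    using up_crossings_eq_down_crossings[OF assms(1), of 0] down_crossings_0[OF assms(1)] assms(2) by simp
  show "up_crossings q (Suc n) = 0" if "up_crossings q n = 0" for n
    using up_crossings_Suc_pos[OF assms(1), of n] that by auto
qed

lemma arrival_eq_vinner:
  assumes "surface_walk M q" "hd q = 0"
  shows "arrival tau (-1 # q) = vinner M (up_crossings q) tau"
proof -
  let ?k = "up_crossings q"
  obtain r where q: "q = 0 # r" using assms by (cases q) auto
  have "?k 0 = 1" using up_crossings_in_layer_vecs[OF assms] by (simp add: layer_vecs_def)
  then have "real (?k l + down_crossings q l) * tau l / 2 = real (?k l) * tau l - (if l = 0 then tau 0 / 2 else 0)"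
    for l by (simp add: down_crossings_from_top[OF assms] field_simps)
  then have "arrival tau q = (\<Sum>l\<le>M. real (?k l) * tau l - (if l = 0 then tau 0 / 2 else 0))"
    by (simp only: arrival_surface_walk[OF assms(1)])
  then have "arrival tau q = vinner M ?k tau - tau 0 / 2"
    by (simp add: vinner_def sum_subtractf)
  then show ?thesis by (simp add: q arrival_Cons)
qed

lemma scat_seqs_with_arrival:
  "{p \<in> scat_seqs M. arrival tau p = t}
     = Cons (-1) ` (\<Union>k\<in>{k \<in> layer_vecs M. vinner M k tau = t}. walks M 0 k (k(0 := 0)))"
  by (auto simp: scat_seqs_iff walks_def image_iff arrival_eq_vinner up_crossings_in_layer_vecs
      down_crossings_from_top)

lemma bij_betw_zero_extension:
  fixes M :: nat
  shows "bij_betw (\<lambda>g n. if n \<le> M then g n else (0::'a::zero)) (PiE {..M} A)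
     {b. (\<forall>n>M. b n = 0) \<and> (\<forall>n\<le>M. b n \<in> A n)}"
  by (rule bij_betw_byWitness[where f' = "\<lambda>b. restrict b {..M}"])
     (auto simp: PiE_def extensional_def fun_eq_iff not_le)

lemma coef_a_eq_crossing_product:
  assumes "k \<in> layer_vecs M"
  shows "coef_a M R k = crossing_product M R 0 True k (k(0 := 0))"
proof -
  have shift: "shiftv M k n = k (Suc n)" if "n \<le> M" for n
    using assms that unfolding layer_vecs_def shiftv_def by auto
  define f where "f n j = (let kt = shiftv M k n; u = min 1 kt in
       real (k n choose j) * real ((kt - u) choose (j - u))
       * (- R n) ^ (kt - j) * R n ^ (k n - j) * transm R n ^ (2 * j))" for n j
  define I where "I n = {min 1 (shiftv M k n)..min (k n) (shiftv M k n)}" for n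
  have "Vset M k = {b. (\<forall>n>M. b n = 0) \<and> (\<forall>n\<le>M. b n \<in> I n)}"
    unfolding Vset_def I_def by auto
  moreover have "coef_a M R k = (\<Sum>b\<in>Vset M k. \<Prod>n\<le>M. f n (b n))"
    unfolding coef_a_def f_def ..
  ultimately have "coef_a M R k = (\<Sum>g\<in>PiE {..M} I. \<Prod>n\<le>M. f n (g n))"
    by (simp add: sum.reindex_bij_betw[OF bij_betw_zero_extension, symmetric])
  also have "\<dots> = (\<Prod>n\<le>M. \<Sum>j\<in>I n. f n j)"
    by (rule prod_sum_PiE[symmetric]) (auto simp: I_def)
  also have "\<dots> = (\<Prod>n\<le>M. iface_factor R n True (k n) (k (Suc n)))"
    by (rule prod.cong) (auto simp: iface_factor_def iface_poly_from_above I_def f_def shift Let_def mult_ac)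
  also have "\<dots> = crossing_product M R 0 True k (k(0 := 0))"
    unfolding crossing_product_def by simp
  finally show ?thesis .
qed

lemma finite_layer_vecs_with_inner:
  assumes "\<forall>n\<le>M. tau n > 0"
  shows "finite {k \<in> layer_vecs M. vinner M k tau = t}"
proof -
  define m where "m = Min (tau ` {..M})"
  have "m > 0" unfolding m_def using assms by (subst Min_gr_iff) auto
  have "k n \<le> nat \<lceil>t / m\<rceil>" if "k \<in> layer_vecs M" "vinner M k tau = t" "n \<le> M" for k n
  proof -
    have "real (k n) * m \<le> real (k n) * tau n"
      unfolding m_def using that(3) by (intro mult_left_mono Min_le) auto
    also have "\<dots> \<le> vinner M k tau"
      unfolding vinner_def using assms that(3) by (intro member_le_sum) (auto intro: less_imp_le)
    finally have "real (k n) \<le> t / m" using \<open>m > 0\<close> that(2) by (simp add: field_simps)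
    then have "int (k n) \<le> \<lceil>t / m\<rceil>" by (simp add: le_ceiling_iff)
    then show ?thesis by (simp add: le_nat_iff)
  qed
  then have "{k \<in> layer_vecs M. vinner M k tau = t}
      \<subseteq> {b. (\<forall>n>M. b n = 0) \<and> (\<forall>n\<le>M. b n \<in> {..nat \<lceil>t / m\<rceil>})}"
    by (auto simp: layer_vecs_def)
  moreover have "finite {b. (\<forall>n>M. b n = 0) \<and> (\<forall>n\<le>M. b n \<in> {..nat \<lceil>t / m\<rceil>})}"
    using bij_betw_finite[OF bij_betw_zero_extension[of M "\<lambda>_. {..nat \<lceil>t / m\<rceil>}"]]
    by (simp add: finite_PiE)
  ultimately show ?thesis by (rule finite_subset)
qed

lemma sum_walk_weight_eq_coef_a:
  assumes "k \<in> layer_vecs M"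
  shows "(\<Sum>q\<in>walks M 0 k (k(0 := 0)). walk_weight R True q) = coef_a M R k"
  unfolding coef_a_eq_crossing_product[OF assms] using assms
  by (intro sum_walk_weight_eq_crossing_product) (auto simp: layer_vecs_def)

theorem theorem1:
  fixes M :: nat and tau R :: "nat \<Rightarrow> real"
  assumes "M \<ge> 1"
    and "\<forall>n\<le>M. tau n > 0"
    and "\<forall>n\<le>M. -1 < R n \<and> R n < 1"
  shows "green M tau R =
    (\<lambda>t. \<Sum>k\<in>{k \<in> layer_vecs M. vinner M k tau = t}. coef_a M R k)"
proof
  fix t
  define K where "K = {k \<in> layer_vecs M. vinner M k tau = t}"
  have "finite K" unfolding K_def using assms(2) by (rule finite_layer_vecs_with_inner)
  have "green M tau R t = (\<Sum>p\<in>Cons (-1) ` (\<Union>k\<in>K. walks M 0 k (k(0 := 0))). seq_weight R p)"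
    unfolding green_def K_def scat_seqs_with_arrival ..
  also have "\<dots> = (\<Sum>q\<in>(\<Union>k\<in>K. walks M 0 k (k(0 := 0))). walk_weight R True q)"
    by (simp add: sum.reindex) (auto simp: walks_def seq_weight_eq_walk_weight intro: sum.cong)
  also have "\<dots> = (\<Sum>k\<in>K. \<Sum>q\<in>walks M 0 k (k(0 := 0)). walk_weight R True q)"
  proof (rule sum.UNION_disjoint[OF \<open>finite K\<close>])
    show "\<forall>k\<in>K. finite (walks M 0 k (k(0 := 0)))"
      by (auto simp: K_def layer_vecs_def intro!: finite_walks)
  qed (auto simp: walks_def)
  also have "\<dots> = (\<Sum>k\<in>K. coef_a M R k)"
    by (auto simp: K_def sum_walk_weight_eq_coef_a intro: sum.cong)
  finally show "green M tau R t = (\<Sum>k\<in>{k \<in> layer_vecs M. vinner M k tau = t}. coef_a M R k)"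
    unfolding K_def .
qed

end
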